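(* Let $\mathcal{X}\subseteq\mathbb{R}^d$ be closed and convex, $\mu,\sigma,\epsilon,\delta>0$. Let $h:\mathcal{X}\to\mathbb{R}$ be continuously differentiable with $D_h(x,y)\ge\frac\sigma2\|x-y\|^2$ for all $x,y$, and let $f:\mathcal{X}\to\mathbb{R}$ be differentiable with $(1/\epsilon)$-Lipschitz gradient, $\mu$-uniformly convex with respect to $h$ (i.e. $D_f(x,y)\ge\mu D_h(x,y)$ for all $x,y$), with minimizer $x^\ast$. Let $(A_k)_{k\ge0}$ be a nondecreasing sequence of positive numbers, $\alpha_k=A_{k+1}-A_k$, $\tau_k=\alpha_k/A_{k+1}$, and $E_k=A_k\big(\mu D_h(x^\ast,z_k)+f(y_k)-f(x^\ast)\big)$. Suppose sequences $(x_k),(y_k),(z_k)$ in $\mathcal{X}$ satisfy, for all $k$, $$x_k=\frac{\tau_k}{1+\tau_k}z_k+\frac1{1+\tau_k}y_k,\qquad \nabla h(z_{k+1})-\nabla h(z_k)=\tau_k\Big(\nabla h(x_k)-\nabla h(z_k)-\frac1\mu\nabla f(x_k)\Big),$$ with $y_{k+1}\in\mathcal{X}$ arbitrary. Then $\frac{E_{k+1}-E_k}{\delta}\le\varepsilon_{k+1}$, where $$\varepsilon_{k+1}=\frac{A_{k+1}}{\delta}\big(f(y_{k+1})-f(x_k)\big)+\frac{A_{k+1}}{\delta}\Big(\frac{\tau_k}{2\epsilon}-\frac{\sigma\mu}{2\tau_k}\Big)\|x_k-y_k\|^2-\frac{A_{k+1}\mu\sigma}{2\delta}\|x_k-y_k\|^2+\frac{\alpha_k}{\delta}\langle\nabla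 f(x_k),y_k-x_k\rangle+\frac{A_{k+1}\mu}{2\sigma\delta}\Big\|\tau_k\Big(\nabla h(x_k)-\nabla h(z_k)-\frac1\mu\nabla f(x_k)\Big)\Big\|^2.$$ When $\mathcal{X}=\mathbb{R}^d$ and $h=\frac12\|\cdot\|^2$, this becomes $$\varepsilon_{k+1}=\frac{A_{k+1}}{\delta}\Big(f(y_{k+1})-f(x_k)+\frac{\tau_k^2}{2\mu}\|\nabla f(x_k)\|^2+\Big(\frac{\tau_k}{2\epsilon}-\frac{\mu}{2\tau_k}\Big)\|x_k-y_k\|^2\Big).$$
   Context: $\|\cdot\|$ is the Euclidean norm; for differentiable $g$, $D_g(y,x)=g(y)-g(x)-\langle\nabla g(x),y-x\rangle$. *)

theory Defs
  imports "HOL-Analysis.Analysis"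
begin

definition bregman :: "('a::real_inner \<Rightarrow> real) \<Rightarrow> ('a \<Rightarrow> 'a) \<Rightarrow> 'a \<Rightarrow> 'a \<Rightarrow> real" where
  "bregman g dg y x = g y - g x - dg x \<bullet> (y - x)"

end

theory Submission
  imports Defs
begin

text \<open>
  Write \<open>D\<close> for the Bregman divergence of \<open>h\<close>, \<open>w = \<nabla>h(z\<^sub>k\<^sub>+\<^sub>1) - \<nabla>h(z\<^sub>k)\<close> and \<open>g = \<nabla>f(x\<^sub>k)\<close>.
  Two applications of the three-point identity turn the mirror step into
  \<open>\<mu>(D(x\<^sup>*,z\<^sub>k\<^sub>+\<^sub>1) - D(x\<^sup>*,z\<^sub>k)) = \<mu>(\<langle>w, z\<^sub>k\<^sub>+\<^sub>1 - z\<^sub>k\<rangle> - D(z\<^sub>k\<^sub>+\<^sub>1,z\<^sub>k))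
    + \<tau>\<^sub>k(\<mu>D(x\<^sup>*,x\<^sub>k) - \<mu>D(x\<^sup>*,z\<^sub>k) - \<mu>D(z\<^sub>k,x\<^sub>k) - \<langle>g, z\<^sub>k - x\<^sup>*\<rangle>)\<close>.
  Young's inequality and the \<open>\<sigma>\<close>-strong convexity of \<open>h\<close> bound the first bracket by
  \<open>\<parallel>w\<parallel>\<^sup>2/(2\<sigma>)\<close>. Uniform convexity of \<open>f\<close> at \<open>(x\<^sup>*, x\<^sub>k)\<close> and at \<open>(y\<^sub>k, x\<^sub>k)\<close>, together with
  the coupling \<open>y\<^sub>k - x\<^sub>k = \<tau>\<^sub>k(x\<^sub>k - z\<^sub>k)\<close>, absorb the remaining divergences and linear terms; the
  \<open>f(x\<^sup>*)\<close> terms cancel. For \<open>h = \<parallel>\<cdot>\<parallel>\<^sup>2/2\<close> one has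
  \<open>\<nabla>h = id\<close> and \<open>\<sigma> = 1\<close>, and expanding \<open>\<parallel>w\<parallel>\<^sup>2\<close> gives the Euclidean form.
\<close>

lemma bregman_three_point:
  "bregman h gh p z - bregman h gh p x - bregman h gh x z = (gh x - gh z) \<bullet> (p - x)"
  unfolding bregman_def by (simp add: algebra_simps inner_diff_left inner_diff_right)

lemma bregman_mirror_step:
  assumes "gh z' - gh z = \<tau> *\<^sub>R (gh x - gh z - c *\<^sub>R g)"
  shows "bregman h gh p z' - bregman h gh p z
       = (gh z' - gh z) \<bullet> (z' - z) - bregman h gh z' z
         + \<tau> * (bregman h gh p x - bregman h gh p z - bregman h gh z x - c * (g \<bullet> (z - p)))"
proof -
  have "bregman h gh p z' - bregman h gh p z = (gh z' - gh z) \<bullet> (z' - p) - bregman h gh z' z"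
    using bregman_three_point[of h gh p z z'] by (simp add: algebra_simps inner_diff_left inner_diff_right)
  also have "(gh z' - gh z) \<bullet> (z' - p) = (gh z' - gh z) \<bullet> (z' - z) + (gh z' - gh z) \<bullet> (z - p)"
    by (simp add: inner_diff_right)
  also have "(gh z' - gh z) \<bullet> (z - p) = \<tau> * ((gh x - gh z) \<bullet> (z - p) - c * (g \<bullet> (z - p)))"
    unfolding assms by (simp add: inner_diff_left)
  also have "(gh x - gh z) \<bullet> (z - p) = bregman h gh p x - bregman h gh p z - bregman h gh z x"
    using bregman_three_point[of h gh p x z] by (simp add: algebra_simps inner_diff_left inner_diff_right)
  finally show ?thesis by simp
qed

lemma lyapunov_mirror_step_eq:
  fixes h :: "'a::real_inner \<Rightarrow> real" and A0 A1 :: real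
  defines "\<tau> \<equiv> (A1 - A0) / A1"
  assumes "A1 > 0" "\<mu> > 0" and mirror: "gh z' - gh z = \<tau> *\<^sub>R (gh x - gh z - (1 / \<mu>) *\<^sub>R g)"
  shows "A1 * (\<mu> * bregman h gh p z') - A0 * (\<mu> * bregman h gh p z)
       = A1 * \<mu> * ((gh z' - gh z) \<bullet> (z' - z) - bregman h gh z' z)
         + (A1 - A0) * (\<mu> * bregman h gh p x - g \<bullet> (z - p)) - (A1 - A0) * \<mu> * bregman h gh z x"
proof -
  have step: "bregman h gh p z' = bregman h gh p z + ((gh z' - gh z) \<bullet> (z' - z) - bregman h gh z' z)
      + \<tau> * (bregman h gh p x - bregman h gh p z - bregman h gh z x) - \<tau> / \<mu> * (g \<bullet> (z - p))"
    using bregman_mirror_step[where gh=gh and z'=z' and z=z and x=x and h=h and p=p, OF mirror] by (simp add: algebra_simps)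
  show ?thesis
    unfolding step \<tau>_def using assms(2,3) by (simp add: field_simps)
qed

lemma inner_le_weighted_norm_sq:
  fixes w v :: "'a::real_inner"
  assumes "\<sigma> > 0"
  shows "w \<bullet> v \<le> (norm w)\<^sup>2 / (2 * \<sigma>) + \<sigma> / 2 * (norm v)\<^sup>2"
proof -
  have "0 \<le> (norm (w - \<sigma> *\<^sub>R v))\<^sup>2" by simp
  also have "\<dots> = (norm w)\<^sup>2 - 2 * \<sigma> * (w \<bullet> v) + \<sigma>\<^sup>2 * (norm v)\<^sup>2"
    unfolding power2_norm_eq_inner
    by (simp add: algebra_simps inner_diff_left inner_diff_right inner_commute power2_eq_square)
  finally show ?thesis using assms by (simp add: field_simps power2_eq_square)
qed

lemma uniformly_convex_imp_strongly_convex: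
  fixes f h :: "'a::real_inner \<Rightarrow> real"
  assumes "\<mu> > 0" "bregman h gh u v \<ge> \<sigma> / 2 * (norm (u - v))\<^sup>2"
    and "bregman f gf u v \<ge> \<mu> * bregman h gh u v"
  shows "\<mu> * \<sigma> / 2 * (norm (u - v))\<^sup>2 \<le> bregman f gf u v"
proof -
  have "\<mu> * (\<sigma> / 2 * (norm (u - v))\<^sup>2) \<le> \<mu> * bregman h gh u v"
    by (rule mult_left_mono[OF assms(2)]) (use assms(1) in simp)
  then show ?thesis using assms(3) by simp
qed

lemma strong_convexity_le_lipschitz_gradient:
  fixes f :: "'a::real_inner \<Rightarrow> real"
  assumes "m / 2 * (norm (u - v))\<^sup>2 \<le> bregman f gf u v"
    and "m / 2 * (norm (v - u))\<^sup>2 \<le> bregman f gf v u"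
    and "norm (gf u - gf v) \<le> L * norm (u - v)"
  shows "m * (norm (u - v))\<^sup>2 \<le> L * (norm (u - v))\<^sup>2"
proof -
  have "m * (norm (u - v))\<^sup>2 \<le> (gf u - gf v) \<bullet> (u - v)"
    using assms(1,2) unfolding bregman_def
    by (simp add: norm_minus_commute algebra_simps inner_diff_left inner_diff_right)
  also have "\<dots> \<le> norm (gf u - gf v) * norm (u - v)" by (rule norm_cauchy_schwarz)
  also have "\<dots> \<le> L * (norm (u - v))\<^sup>2"
    using mult_right_mono[OF assms(3) norm_ge_zero] by (simp add: power2_eq_square mult.assoc)
  finally show ?thesis .
qed

lemma coupling_diff_eq:
  fixes x y z :: "'a::real_vector"
  assumes "0 \<le> \<tau>" "x = (\<tau> / (1 + \<tau>)) *\<^sub>R z + (1 / (1 + \<tau>)) *\<^sub>R y"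
  shows "y - x = \<tau> *\<^sub>R (x - z)"
proof -
  have "(1 + \<tau>) *\<^sub>R x = \<tau> *\<^sub>R z + y"
    using assms by (simp add: scaleR_add_right)
  then show ?thesis by (simp add: algebra_simps)
qed

text \<open>If \<open>A0 = A1\<close> then \<open>\<tau> = 0\<close>, and the term with \<open>2 * \<tau>\<close> in the denominator is \<open>0\<close>
  by the convention \<open>x / 0 = 0\<close>; the inequality still holds because the curvature term it
  replaces carries the factor \<open>A1 - A0 = 0\<close>.\<close>

lemma lyapunov_step_sharp:
  fixes h f :: "'a::real_inner \<Rightarrow> real" and gh gf :: "'a \<Rightarrow> 'a" and A0 A1 :: real
  defines "\<tau> \<equiv> (A1 - A0) / A1"
  assumes \<mu>: "\<mu> > 0" and \<sigma>: "\<sigma> > 0" and A: "0 < A0" "A0 \<le> A1"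
    and h_strong: "\<And>u v. u \<in> X \<Longrightarrow> v \<in> X \<Longrightarrow> bregman h gh u v \<ge> \<sigma> / 2 * (norm (u - v))\<^sup>2"
    and f_unif: "\<And>u v. u \<in> X \<Longrightarrow> v \<in> X \<Longrightarrow> bregman f gf u v \<ge> \<mu> * bregman h gh u v"
    and in_X: "xs \<in> X" "x \<in> X" "y \<in> X" "z \<in> X" "z' \<in> X"
    and coupling: "y - x = \<tau> *\<^sub>R (x - z)"
    and mirror: "gh z' - gh z = \<tau> *\<^sub>R (gh x - gh z - (1 / \<mu>) *\<^sub>R gf x)"
  shows "A1 * (\<mu> * bregman h gh xs z' + f y' - f xs) - A0 * (\<mu> * bregman h gh xs z + f y - f xs)
     \<le> A1 * (f y' - f x) + (A1 - A0) * (gf x \<bullet> (y - x))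
       - A0 * (\<mu> * \<sigma> / 2 * (norm (x - y))\<^sup>2) - A1 * (\<sigma> * \<mu> / (2 * \<tau>)) * (norm (x - y))\<^sup>2
       + A1 * \<mu> / (2 * \<sigma>) * (norm (gh z' - gh z))\<^sup>2"
proof -
  define D where "D = bregman h gh"
  define g where "g = gf x"
  define w where "w = gh z' - gh z"
  define N where "N = (norm (x - y))\<^sup>2"
  define \<alpha> where "\<alpha> = A1 - A0"
  have A1: "A1 > 0" and \<alpha>: "\<alpha> \<ge> 0" and A1_\<tau>: "A1 * \<tau> = \<alpha>"
    using A by (auto simp: \<tau>_def \<alpha>_def)
  have key: "A1 * (\<mu> * D xs z') - A0 * (\<mu> * D xs z)
      = A1 * \<mu> * (w \<bullet> (z' - z) - D z' z) + \<alpha> * (\<mu> * D xs x - g \<bullet> (z - xs)) - \<alpha> * \<mu> * D z x"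
    unfolding D_def w_def g_def \<alpha>_def
    by (rule lyapunov_mirror_step_eq[where gh=gh and z'=z' and z=z and x=x, OF A1 \<mu> mirror[unfolded \<tau>_def]])
  have young: "A1 * \<mu> * (w \<bullet> (z' - z) - D z' z) \<le> A1 * \<mu> / (2 * \<sigma>) * (norm w)\<^sup>2"
  proof -
    have "w \<bullet> (z' - z) - D z' z \<le> (norm w)\<^sup>2 / (2 * \<sigma>)"
      using inner_le_weighted_norm_sq[OF \<sigma>, of w "z' - z"] h_strong[OF in_X(5,4)] unfolding D_def by linarith
    then show ?thesis using mult_left_mono[of _ _ "A1 * \<mu>"] A1 \<mu> by fastforce
  qed
  have optimality: "\<alpha> * (\<mu> * D xs x - g \<bullet> (z - xs)) \<le> \<alpha> * (f xs - f x) + A1 * (g \<bullet> (y - x))"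
  proof -
    have "\<mu> * D xs x - g \<bullet> (z - xs) \<le> f xs - f x + g \<bullet> (x - z)"
      using f_unif[OF in_X(1,2)] unfolding D_def g_def bregman_def by (simp add: inner_diff_right)
    moreover have "\<alpha> * (g \<bullet> (x - z)) = A1 * (g \<bullet> (y - x))"
      unfolding coupling A1_\<tau>[symmetric] by simp
    ultimately show ?thesis using mult_left_mono[OF _ \<alpha>] by (fastforce simp: algebra_simps)
  qed
  have curvature_z: "A1 * (\<sigma> * \<mu> / (2 * \<tau>)) * N \<le> \<alpha> * \<mu> * D z x"
  proof (cases "\<tau> = 0")
    case True
    then show ?thesis using A1_\<tau> by simp
  next
    case False
    have "N = \<tau>\<^sup>2 * (norm (x - z))\<^sup>2"
      unfolding N_def norm_minus_commute[of x y] coupling by (simp add: power_mult_distrib)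
    then have "A1 * (\<sigma> * \<mu> / (2 * \<tau>)) * N = \<alpha> * \<mu> * (\<sigma> / 2 * (norm (z - x))\<^sup>2)"
      using False unfolding A1_\<tau>[symmetric] by (simp add: field_simps power2_eq_square norm_minus_commute)
    also have "\<dots> \<le> \<alpha> * \<mu> * D z x"
      unfolding D_def by (rule mult_left_mono[OF h_strong[OF in_X(4,2)]]) (use \<alpha> \<mu> in simp)
    finally show ?thesis .
  qed
  have curvature_y: "A0 * (\<mu> * \<sigma> / 2 * N) \<le> A0 * (f y - f x - g \<bullet> (y - x))"
    using uniformly_convex_imp_strongly_convex[OF \<mu> h_strong[OF in_X(3,2)] f_unif[OF in_X(3,2)]] A
    unfolding N_def g_def bregman_def by (simp add: norm_minus_commute mult_left_mono)
  have "A1 * (\<mu> * D xs z' + f y' - f xs) - A0 * (\<mu> * D xs z + f y - f xs)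
      = A1 * (\<mu> * D xs z') - A0 * (\<mu> * D xs z) + (A1 * (f y' - f xs) - A0 * (f y - f xs))"
    by (simp add: algebra_simps)
  also have "\<dots> \<le> A1 * \<mu> / (2 * \<sigma>) * (norm w)\<^sup>2 + (\<alpha> * (f xs - f x) + A1 * (g \<bullet> (y - x)))
      - A1 * (\<sigma> * \<mu> / (2 * \<tau>)) * N + (A1 * (f y' - f xs) - A0 * (f y - f xs))"
    unfolding key using young optimality curvature_z by linarith
  also have "\<dots> = A1 * (f y' - f x) + \<alpha> * (g \<bullet> (y - x)) - A0 * (\<mu> * \<sigma> / 2 * N)
      - A1 * (\<sigma> * \<mu> / (2 * \<tau>)) * N + A1 * \<mu> / (2 * \<sigma>) * (norm w)\<^sup>2
      + (A0 * (\<mu> * \<sigma> / 2 * N) - A0 * (f y - f x - g \<bullet> (y - x)))"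
    by (simp add: \<alpha>_def algebra_simps)
  also have "\<dots> \<le> A1 * (f y' - f x) + \<alpha> * (g \<bullet> (y - x)) - A0 * (\<mu> * \<sigma> / 2 * N)
      - A1 * (\<sigma> * \<mu> / (2 * \<tau>)) * N + A1 * \<mu> / (2 * \<sigma>) * (norm w)\<^sup>2"
    using curvature_y by linarith
  finally show ?thesis unfolding D_def g_def w_def N_def \<alpha>_def .
qed

text \<open>The Lipschitz bound enters only through \<open>\<mu> \<sigma> \<le> 1 / \<epsilon>\<close>, which trades the curvature
  term \<open>-(A1 - A0) \<mu> \<sigma> \<parallel>x - y\<parallel>\<^sup>2 / 2\<close> of the sharp bound for \<open>(A1 - A0) \<parallel>x - y\<parallel>\<^sup>2 / (2 \<epsilon>)\<close>.\<close>

lemma lyapunov_step: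
  fixes h f :: "'a::real_inner \<Rightarrow> real" and gh gf :: "'a \<Rightarrow> 'a" and A0 A1 :: real
  defines "\<tau> \<equiv> (A1 - A0) / A1"
  assumes \<mu>: "\<mu> > 0" and \<sigma>: "\<sigma> > 0" and \<epsilon>: "\<epsilon> > 0" and A: "0 < A0" "A0 \<le> A1"
    and h_strong: "\<And>u v. u \<in> X \<Longrightarrow> v \<in> X \<Longrightarrow> bregman h gh u v \<ge> \<sigma> / 2 * (norm (u - v))\<^sup>2"
    and f_lip: "\<And>u v. u \<in> X \<Longrightarrow> v \<in> X \<Longrightarrow> norm (gf u - gf v) \<le> (1 / \<epsilon>) * norm (u - v)"
    and f_unif: "\<And>u v. u \<in> X \<Longrightarrow> v \<in> X \<Longrightarrow> bregman f gf u v \<ge> \<mu> * bregman h gh u v"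
    and in_X: "xs \<in> X" "x \<in> X" "y \<in> X" "z \<in> X" "z' \<in> X"
    and coupling: "y - x = \<tau> *\<^sub>R (x - z)"
    and mirror: "gh z' - gh z = \<tau> *\<^sub>R (gh x - gh z - (1 / \<mu>) *\<^sub>R gf x)"
  shows "A1 * (\<mu> * bregman h gh xs z' + f y' - f xs) - A0 * (\<mu> * bregman h gh xs z + f y - f xs)
     \<le> A1 * (f y' - f x) + A1 * (\<tau> / (2 * \<epsilon>) - \<sigma> * \<mu> / (2 * \<tau>)) * (norm (x - y))\<^sup>2
       - A1 * \<mu> * \<sigma> / 2 * (norm (x - y))\<^sup>2 + (A1 - A0) * (gf x \<bullet> (y - x))
       + A1 * \<mu> / (2 * \<sigma>) * (norm (\<tau> *\<^sub>R (gh x - gh z - (1 / \<mu>) *\<^sub>R gf x)))\<^sup>2"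
proof -
  define N where "N = (norm (x - y))\<^sup>2"
  have A1_\<tau>: "A1 * \<tau> = A1 - A0"
    using A by (simp add: \<tau>_def)
  have "\<mu> * \<sigma> * N \<le> 1 / \<epsilon> * N"
    unfolding N_def
    by (rule strong_convexity_le_lipschitz_gradient[OF
          uniformly_convex_imp_strongly_convex[OF \<mu> h_strong[OF in_X(2,3)] f_unif[OF in_X(2,3)]]
          uniformly_convex_imp_strongly_convex[OF \<mu> h_strong[OF in_X(3,2)] f_unif[OF in_X(3,2)]]
          f_lip[OF in_X(2,3)]])
  then have lipschitz: "(A1 - A0) * (\<mu> * \<sigma> * N) \<le> A1 * \<tau> * (1 / \<epsilon> * N)"
    unfolding A1_\<tau> using A by (intro mult_left_mono) auto
  have "A1 * (\<mu> * bregman h gh xs z' + f y' - f xs) - A0 * (\<mu> * bregman h gh xs z + f y - f xs)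
     \<le> A1 * (f y' - f x) + (A1 - A0) * (gf x \<bullet> (y - x)) - A0 * (\<mu> * \<sigma> / 2 * N)
       - A1 * (\<sigma> * \<mu> / (2 * \<tau>)) * N
       + A1 * \<mu> / (2 * \<sigma>) * (norm (\<tau> *\<^sub>R (gh x - gh z - (1 / \<mu>) *\<^sub>R gf x)))\<^sup>2"
    using lyapunov_step_sharp[OF \<mu> \<sigma> A h_strong f_unif in_X coupling[unfolded \<tau>_def] mirror[unfolded \<tau>_def]]
    unfolding mirror N_def \<tau>_def .
  also have "\<dots> \<le> A1 * (f y' - f x) + A1 * (\<tau> / (2 * \<epsilon>) - \<sigma> * \<mu> / (2 * \<tau>)) * N
       - A1 * \<mu> * \<sigma> / 2 * N + (A1 - A0) * (gf x \<bullet> (y - x))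
       + A1 * \<mu> / (2 * \<sigma>) * (norm (\<tau> *\<^sub>R (gh x - gh z - (1 / \<mu>) *\<^sub>R gf x)))\<^sup>2"
    using lipschitz by (simp add: algebra_simps)
  finally show ?thesis unfolding N_def .
qed

lemma gradient_half_norm_sq:
  assumes "((\<lambda>u. (norm u)\<^sup>2 / 2) has_derivative (\<lambda>v. g \<bullet> v)) (at u)"
  shows "g = u"
proof -
  have "((\<lambda>u. (norm u)\<^sup>2 / 2) has_derivative (\<lambda>v. u \<bullet> v)) (at u)"
    using has_derivative_inner[OF has_derivative_ident has_derivative_ident, of u UNIV]
    by (auto dest: has_derivative_mult_right[of _ _ _ "1/2"] simp: power2_norm_eq_inner inner_commute)
  then have "(\<lambda>v. g \<bullet> v) = (\<lambda>v. u \<bullet> v)" by (rule has_derivative_unique[OF assms])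
  then have "(g - u) \<bullet> (g - u) = 0" by (metis inner_diff_left right_minus_eq)
  then show ?thesis by simp
qed

lemma bregman_half_norm_sq: "bregman (\<lambda>u. (norm u)\<^sup>2 / 2) id u v = (norm (u - v))\<^sup>2 / 2"
  unfolding bregman_def power2_norm_eq_inner
  by (simp add: inner_diff_left inner_diff_right inner_commute field_simps)

lemma lyapunov_step_euclidean:
  fixes f :: "'a::real_inner \<Rightarrow> real" and gf :: "'a \<Rightarrow> 'a" and A0 A1 :: real
  defines "\<tau> \<equiv> (A1 - A0) / A1" and "h \<equiv> \<lambda>u. (norm u)\<^sup>2 / 2"
  assumes \<mu>: "\<mu> > 0" and \<epsilon>: "\<epsilon> > 0" and A: "0 < A0" "A0 \<le> A1"
    and f_lip: "\<And>u v. u \<in> X \<Longrightarrow> v \<in> X \<Longrightarrow> norm (gf u - gf v) \<le> (1 / \<epsilon>) * norm (u - v)"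
    and f_unif: "\<And>u v. u \<in> X \<Longrightarrow> v \<in> X \<Longrightarrow> bregman f gf u v \<ge> \<mu> * bregman h id u v"
    and in_X: "xs \<in> X" "x \<in> X" "y \<in> X" "z \<in> X" "z' \<in> X"
    and coupling: "y - x = \<tau> *\<^sub>R (x - z)"
    and mirror: "z' - z = \<tau> *\<^sub>R (x - z - (1 / \<mu>) *\<^sub>R gf x)"
  shows "A1 * (\<mu> * bregman h id xs z' + f y' - f xs) - A0 * (\<mu> * bregman h id xs z + f y - f xs)
     \<le> A1 * (f y' - f x + \<tau>\<^sup>2 / (2 * \<mu>) * (norm (gf x))\<^sup>2
            + (\<tau> / (2 * \<epsilon>) - \<mu> / (2 * \<tau>)) * (norm (x - y))\<^sup>2)"
proof -
  have A1_\<tau>: "A1 * \<tau> = A1 - A0"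
    using A by (simp add: \<tau>_def)
  have h_strong: "\<And>u v. u \<in> X \<Longrightarrow> v \<in> X \<Longrightarrow> bregman h id u v \<ge> 1 / 2 * (norm (u - v))\<^sup>2"
    unfolding h_def bregman_half_norm_sq by simp
  have mirror_term: "(norm (\<tau> *\<^sub>R (x - z - (1 / \<mu>) *\<^sub>R gf x)))\<^sup>2
      = (norm (x - y))\<^sup>2 - 2 * \<tau> / \<mu> * (gf x \<bullet> (y - x)) + \<tau>\<^sup>2 / \<mu>\<^sup>2 * (norm (gf x))\<^sup>2"
  proof -
    have square: "(norm (a - c *\<^sub>R b))\<^sup>2 = (norm a)\<^sup>2 - 2 * c * (b \<bullet> a) + c\<^sup>2 * (norm b)\<^sup>2"
      for a b :: 'a and c :: real
      unfolding power2_norm_eq_inner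
      by (simp add: inner_diff_left inner_diff_right inner_commute algebra_simps power2_eq_square)
    have "\<tau> *\<^sub>R (x - z - (1 / \<mu>) *\<^sub>R gf x) = (y - x) - (\<tau> / \<mu>) *\<^sub>R gf x"
      using coupling by (simp add: algebra_simps)
    then show ?thesis
      unfolding square norm_minus_commute[of x y] by (simp add: square power_divide)
  qed
  have euclid_term: "A1 * \<mu> / (2 * 1) * (norm (\<tau> *\<^sub>R (id x - id z - (1 / \<mu>) *\<^sub>R gf x)))\<^sup>2
      = A1 * \<mu> * 1 / 2 * (norm (x - y))\<^sup>2 - (A1 - A0) * (gf x \<bullet> (y - x))
        + A1 * (\<tau>\<^sup>2 / (2 * \<mu>) * (norm (gf x))\<^sup>2)"
    unfolding id_apply mirror_term A1_\<tau>[symmetric] using \<mu> by (simp add: field_simps power2_eq_square)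
  have mirror_id: "id z' - id z = \<tau> *\<^sub>R (id x - id z - (1 / \<mu>) *\<^sub>R gf x)"
    using mirror by simp
  show ?thesis
    using lyapunov_step[OF \<mu> zero_less_one \<epsilon> A h_strong f_lip f_unif in_X
        coupling[unfolded \<tau>_def] mirror_id[unfolded \<tau>_def], folded \<tau>_def, where y'=y']
    unfolding euclid_term by (simp add: algebra_simps id_def)
qed

theorem proposition7:
  fixes X :: "'a::euclidean_space set"
    and h f :: "'a \<Rightarrow> real"
    and gh gf :: "'a \<Rightarrow> 'a"
    and \<mu> \<sigma> \<epsilon> \<delta> :: real
    and xs :: 'a
    and A :: "nat \<Rightarrow> real"
    and x y z :: "nat \<Rightarrow> 'a"
  assumes X_closed: "closed X" and X_convex: "convex X"
    and pos: "\<mu> > 0" "\<sigma> > 0" "\<epsilon> > 0" "\<delta> > 0"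
    and h_grad: "\<And>u. u \<in> X \<Longrightarrow> (h has_derivative (\<lambda>v. gh u \<bullet> v)) (at u within X)"
    and gh_cont: "continuous_on X gh"
    and h_strong: "\<And>u v. u \<in> X \<Longrightarrow> v \<in> X \<Longrightarrow> bregman h gh u v \<ge> \<sigma> / 2 * (norm (u - v))\<^sup>2"
    and f_grad: "\<And>u. u \<in> X \<Longrightarrow> (f has_derivative (\<lambda>v. gf u \<bullet> v)) (at u within X)"
    and f_lip: "\<And>u v. u \<in> X \<Longrightarrow> v \<in> X \<Longrightarrow> norm (gf u - gf v) \<le> (1 / \<epsilon>) * norm (u - v)"
    and f_unif: "\<And>u v. u \<in> X \<Longrightarrow> v \<in> X \<Longrightarrow> bregman f gf u v \<ge> \<mu> * bregman h gh u v"
    and xs_in: "xs \<in> X" and xs_min: "\<And>u. u \<in> X \<Longrightarrow> f xs \<le> f u"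
    and A_pos: "\<And>k. A k > 0" and A_mono: "mono A"
    and seq_in: "\<And>k. x k \<in> X" "\<And>k. y k \<in> X" "\<And>k. z k \<in> X"
    and coupling: "\<And>k. x k = (((A (Suc k) - A k) / A (Suc k)) / (1 + (A (Suc k) - A k) / A (Suc k))) *\<^sub>R z k
                              + (1 / (1 + (A (Suc k) - A k) / A (Suc k))) *\<^sub>R y k"
    and mirror: "\<And>k. gh (z (Suc k)) - gh (z k)
                   = ((A (Suc k) - A k) / A (Suc k)) *\<^sub>R (gh (x k) - gh (z k) - (1 / \<mu>) *\<^sub>R gf (x k))"
  shows "\<forall>k. let \<alpha> = A (Suc k) - A k; \<tau> = \<alpha> / A (Suc k);
               E = (\<lambda>j. A j * (\<mu> * bregman h gh xs (z j) + f (y j) - f xs)) in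
           (E (Suc k) - E k) / \<delta> \<le>
              A (Suc k) / \<delta> * (f (y (Suc k)) - f (x k))
            + A (Suc k) / \<delta> * (\<tau> / (2 * \<epsilon>) - \<sigma> * \<mu> / (2 * \<tau>)) * (norm (x k - y k))\<^sup>2
            - A (Suc k) * \<mu> * \<sigma> / (2 * \<delta>) * (norm (x k - y k))\<^sup>2
            + \<alpha> / \<delta> * (gf (x k) \<bullet> (y k - x k))
            + A (Suc k) * \<mu> / (2 * \<sigma> * \<delta>)
                * (norm (\<tau> *\<^sub>R (gh (x k) - gh (z k) - (1 / \<mu>) *\<^sub>R gf (x k))))\<^sup>2
           \<and> ((X = UNIV \<and> (\<forall>u. h u = (norm u)\<^sup>2 / 2)) \<longrightarrow>
              (E (Suc k) - E k) / \<delta> \<le>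
                A (Suc k) / \<delta> * (f (y (Suc k)) - f (x k)
                  + \<tau>\<^sup>2 / (2 * \<mu>) * (norm (gf (x k)))\<^sup>2
                  + (\<tau> / (2 * \<epsilon>) - \<mu> / (2 * \<tau>)) * (norm (x k - y k))\<^sup>2))"
proof -
  have A: "0 < A k" "A k \<le> A (Suc k)" for k
    using A_pos monoD[OF A_mono, of k "Suc k"] by auto
  have in_X: "x k \<in> X" "y k \<in> X" "z k \<in> X" "z (Suc k) \<in> X" for k
    using seq_in by auto
  have yx: "y k - x k = ((A (Suc k) - A k) / A (Suc k)) *\<^sub>R (x k - z k)" for k
    by (rule coupling_diff_eq[OF _ coupling]) (use A[of k] in simp)
  have divide_bound: "L / \<delta> \<le> a / \<delta> * p + a / \<delta> * q * n - a * \<mu> * \<sigma> / (2 * \<delta>) * n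
      + b / \<delta> * g + a * \<mu> / (2 * \<sigma> * \<delta>) * w"
    if "L \<le> a * p + a * q * n - a * \<mu> * \<sigma> / 2 * n + b * g + a * \<mu> / (2 * \<sigma>) * w"
    for L a p q n b g w :: real
    using divide_right_mono[OF that less_imp_le[OF pos(4)]]
    by (simp add: add_divide_distrib diff_divide_distrib)
  have divide_bound_euclidean: "L / \<delta> \<le> a / \<delta> * p" if "L \<le> a * p" for L a p :: real
    using divide_right_mono[OF that less_imp_le[OF pos(4)]] by simp
  show ?thesis
    unfolding Let_def
  proof (intro allI conjI impI, goal_cases)
    case (1 k)
    show ?case
      by (rule divide_bound[OF lyapunov_step[OF pos(1-3) A[of k] h_strong f_lip f_unif xs_in in_X[of k]
          yx[of k] mirror[of k]]])
  next
    case (2 k)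
    then have X: "X = UNIV" and h: "h = (\<lambda>u. (norm u)\<^sup>2 / 2)"
      by auto
    have gh: "gh = id"
      using gradient_half_norm_sq[OF h_grad[unfolded X h, OF UNIV_I]] by auto
    show ?case
      unfolding h gh
      by (rule divide_bound_euclidean[OF lyapunov_step_euclidean[OF pos(1,3) A[of k] f_lip
          f_unif[unfolded h gh] xs_in in_X[of k] yx[of k] mirror[of k, unfolded gh id_apply]]])
  qed
qed

end
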